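(* Let $h$ be a positive integer and $L$ an $h$-modular lattice with zero. Let $\mathcal{A}$ be the set of all antitone maps $x\colon \mathrm{J}(K)\to L$ with finite range. Then for every $x\in\mathcal{A}$, the map $x^{(1)}$ also belongs to $\mathcal{A}$.
   Context: $K$ is the lattice whose join-irreducible elements are $c$, $a_n$, $b_n$ ($n<\omega$): concretely, with $A_m=\{a_k:k\geq m\}$, $B_n=\{b_k:k\geq n\}$, $C=\{c\}$, $K$ consists of $\varnothing$, $C$, all $A_m$, all $B_n$, and all $C\cup A_m\cup B_n$ with $|m-n|\leq1$, ordered by inclusion, and $a_n$, $b_n$, $c$ are identified with $A_n$, $B_n$, $C$. Thus $\mathrm{J}(K)=\{c\}\cup\{a_n\}\cup\{b_n\}$ with $a_0>a_1>\cdots$, $b_0>b_1>\cdots$, and no other comparabilities. A map $x$ is antitone if $p\leq q$ implies $x(p)\geq x(q)$. For $x\in\mathcal{A}$ the sequences $(x(a_n))$, $(x(b_n))$ are increasing and eventually constant; denote their limits by $x(a_\infty)$, $x(b_\infty)$. Define $x^{(1)}\colon\mathrm{J}(K)\to L$ by $x^{(1)}(c)=x(c)\vee(x(a_\infty)\wedge x(b_\infty))$, $x^{(1)}(a_0)=x(a_0)$, $x^{(1)}(b_0)=x(b_0)$, $x^{(1)}(a_{n+1})=x(a_{n+1})\vee(x(b_n)\wedge x(c))$, $x^{(1)}(b_{n+1})=x(b_{n+1})\vee(x(a_n)\wedge x(c))$ for $n<\omega$. A lattice $L$ is $h$-modular if $u^{(h+1)}=u^{(h)}$ for all $u\in L^3$,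 where $\langle x,y,z\rangle^{(1)}=\langle x\vee(y\wedge z),y\vee(x\wedge z),z\vee(x\wedge y)\rangle$ and $u^{(k+1)}=(u^{(k)})^{(1)}$. *)

theory Defs
  imports Main
begin

datatype jk = C | A nat | B nat

definition jk_le :: "jk \<Rightarrow> jk \<Rightarrow> bool" where
  "jk_le p q \<longleftrightarrow> p = q \<or> (\<exists>m n. p = A m \<and> q = A n \<and> n \<le> m)
                          \<or> (\<exists>m n. p = B m \<and> q = B n \<and> n \<le> m)"

definition antitone_jk :: "(jk \<Rightarrow> 'a::order) \<Rightarrow> bool" where
  "antitone_jk x \<longleftrightarrow> (\<forall>p q. jk_le p q \<longrightarrow> x q \<le> x p)"

definition AA :: "(jk \<Rightarrow> 'a::order) set" where
  "AA = {x. antitone_jk x \<and> finite (range x)}"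

definition a_inf :: "(jk \<Rightarrow> 'a) \<Rightarrow> 'a" where
  "a_inf x = (THE v. \<exists>N. \<forall>n\<ge>N. x (A n) = v)"

definition b_inf :: "(jk \<Rightarrow> 'a) \<Rightarrow> 'a" where
  "b_inf x = (THE v. \<exists>N. \<forall>n\<ge>N. x (B n) = v)"

definition x1 :: "(jk \<Rightarrow> 'a::lattice) \<Rightarrow> jk \<Rightarrow> 'a" where
  "x1 x p = (case p of
      C \<Rightarrow> sup (x C) (inf (a_inf x) (b_inf x))
    | A 0 \<Rightarrow> x (A 0)
    | B 0 \<Rightarrow> x (B 0)
    | A (Suc n) \<Rightarrow> sup (x (A (Suc n))) (inf (x (B n)) (x C))
    | B (Suc n) \<Rightarrow> sup (x (B (Suc n))) (inf (x (A n)) (x C)))"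

definition tstep :: "'a::lattice \<times> 'a \<times> 'a \<Rightarrow> 'a \<times> 'a \<times> 'a" where
  "tstep u = (case u of (x, y, z) \<Rightarrow>
      (sup x (inf y z), sup y (inf x z), sup z (inf x y)))"

definition h_modular :: "'a::lattice itself \<Rightarrow> nat \<Rightarrow> bool" where
  "h_modular _ h \<longleftrightarrow> (\<forall>u::'a \<times> 'a \<times> 'a. (tstep ^^ Suc h) u = (tstep ^^ h) u)"

end

theory Submission
  imports Defs
begin

text \<open>Apart from its value at \<open>c\<close>, every value of \<open>x1 x\<close> has the form \<open>u \<squnion> (v \<sqinter> w)\<close>
  with \<open>u, v, w\<close> values of \<open>x\<close>, so the range stays finite. Antitonicity on \<open>J(K)\<close> only
  asks for increasing values along the chains \<open>a\<^sub>n\<close> and \<open>b\<^sub>n\<close>, and \<open>\<squnion>\<close>, \<open>\<sqinter>\<close> are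
  monotone. Neither argument uses \<open>h\<close>-modularity or the bottom element.\<close>

lemma antitone_jk_iff_le_Suc:
  "antitone_jk x \<longleftrightarrow> (\<forall>n. x (A n) \<le> x (A (Suc n))) \<and> (\<forall>n. x (B n) \<le> x (B (Suc n)))"
proof
  assume "antitone_jk x"
  then show "(\<forall>n. x (A n) \<le> x (A (Suc n))) \<and> (\<forall>n. x (B n) \<le> x (B (Suc n)))"
    unfolding antitone_jk_def jk_le_def by (metis le_SucI order_refl)
next
  assume "(\<forall>n. x (A n) \<le> x (A (Suc n))) \<and> (\<forall>n. x (B n) \<le> x (B (Suc n)))"
  then have "n \<le> m \<Longrightarrow> x (A n) \<le> x (A m)" "n \<le> m \<Longrightarrow> x (B n) \<le> x (B m)" for n m
    by (auto intro: lift_Suc_mono_le[of "\<lambda>n. x (A n)"] lift_Suc_mono_le[of "\<lambda>n. x (B n)"])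
  then show "antitone_jk x"
    unfolding antitone_jk_def jk_le_def by auto
qed

lemma x1_simps [simp]:
  "x1 x (A 0) = x (A 0)"
  "x1 x (B 0) = x (B 0)"
  "x1 x (A (Suc n)) = sup (x (A (Suc n))) (inf (x (B n)) (x C))"
  "x1 x (B (Suc n)) = sup (x (B (Suc n))) (inf (x (A n)) (x C))"
  by (simp_all add: x1_def)

lemma range_x1_subset:
  fixes x :: "jk \<Rightarrow> 'a::lattice"
  defines "f \<equiv> \<lambda>(u, v, w). sup u (inf v w)"
  shows "range (x1 x) \<subseteq> insert (x1 x C) (f ` (range x \<times> range x \<times> range x))"
proof -
  have "x1 x p \<in> f ` (range x \<times> range x \<times> range x)" if "p \<noteq> C" for p
  proof -
    consider "p = A 0" | "p = B 0" | n where "p = A (Suc n)" | n where "p = B (Suc n)"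
      using \<open>p \<noteq> C\<close> by (metis jk.exhaust not0_implies_Suc)
    then show ?thesis
    proof cases
      case 1
      then show ?thesis by (intro image_eqI[of _ _ "(x (A 0), x (A 0), x (A 0))"]) (auto simp: f_def)
    next
      case 2
      then show ?thesis by (intro image_eqI[of _ _ "(x (B 0), x (B 0), x (B 0))"]) (auto simp: f_def)
    next
      case 3
      then show ?thesis by (intro image_eqI[of _ _ "(x (A (Suc n)), x (B n), x C)"]) (auto simp: f_def)
    next
      case 4
      then show ?thesis by (intro image_eqI[of _ _ "(x (B (Suc n)), x (A n), x C)"]) (auto simp: f_def)
    qed
  qed
  then show ?thesis
    by (intro subsetI) (metis (no_types, lifting) imageE insertCI)
qed

lemma finite_range_x1:
  fixes x :: "jk \<Rightarrow> 'a::lattice"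
  assumes "finite (range x)"
  shows "finite (range (x1 x))"
  using assms by (intro finite_subset[OF range_x1_subset]) auto

lemma antitone_jk_x1:
  fixes x :: "jk \<Rightarrow> 'a::lattice"
  assumes "antitone_jk x"
  shows "antitone_jk (x1 x)"
proof -
  have a: "x (A n) \<le> x (A (Suc n))" and b: "x (B n) \<le> x (B (Suc n))" for n
    using assms by (auto simp: antitone_jk_iff_le_Suc)
  have "x1 x (A n) \<le> x1 x (A (Suc n))" for n
    using a[of 0] sup_mono[OF a inf_mono[OF b order_refl]] by (cases n) (auto intro: le_supI1)
  moreover have "x1 x (B n) \<le> x1 x (B (Suc n))" for n
    using b[of 0] sup_mono[OF b inf_mono[OF a order_refl]] by (cases n) (auto intro: le_supI1)
  ultimately show ?thesis
    by (simp add: antitone_jk_iff_le_Suc)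
qed

theorem lemma5p1:
  fixes h :: nat and x :: "jk \<Rightarrow> 'a::bounded_lattice_bot"
  assumes "0 < h"
    and "h_modular TYPE('a) h"
    and "x \<in> AA"
  shows "x1 x \<in> AA"
  using assms(3) finite_range_x1 antitone_jk_x1 unfolding AA_def by blast

end
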